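(* Let $r\ge 1$ and $k\ge1$ be integers. Start with a set of $r+1$ points in general position on the $r$-dimensional unit sphere and apply $k-1$ truncations. Then the 1-skeleton of the convex hull of the resulting set of points is isomorphic to the graph $G_{r,k}$.
   Context: Truncation of a finite set of points on the unit sphere: take the 1-skeleton (vertices and edges) of the convex hull of the points; choose $\delta>0$ small enough that the concentric sphere of radius $1-\delta$ meets each edge of this 1-skeleton in two points; the new point set consists of all these intersection points, rescaled by $1/(1-\delta)$ so they lie on the unit sphere again. A Hanoi state is a sequence $\vec x=(x_1,\dots,x_k)$ of nonnegative integers with $x_i\ne x_{i-1}$ for $i>1$; $\mathcal H_{r,k}$ is the set of Hanoi states in $\{0,\dots,r\}^k$. Moves on $\mathcal H_{r,k}$: an adjustment changes $x_k$ to any other value in $\{0,\dots,r\}$ different from $x_{k-1}$ (if $k=1$, any other value); for $k\ge2$, an involution finds the longest final segment of $\vec x$ on which the entries alternate between $x_k$ and $x_{k-1}$ and swaps these two values throughout that segment. $G_{r,k}$ is the graph with vertex set $\mathcal H_{r,k}$ in which two states are adjacent iff one is obtained from the other by a single move. *)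

theory Defs
  imports "HOL-Analysis.Analysis"
begin

definition skel_vertex :: "('a::euclidean_space) set \<Rightarrow> 'a \<Rightarrow> bool" where
  "skel_vertex P x \<longleftrightarrow> x extreme_point_of (convex hull P)"

definition skel_edge :: "('a::euclidean_space) set \<Rightarrow> 'a \<Rightarrow> 'a \<Rightarrow> bool" where
  "skel_edge P u v \<longleftrightarrow> u \<noteq> v \<and> closed_segment u v face_of (convex hull P)"

definition trunc :: "('a::euclidean_space) set \<Rightarrow> real \<Rightarrow> 'a set \<Rightarrow> bool" where
  "trunc P d Q \<longleftrightarrow> 0 < d \<and> d < 1 \<and>
     (\<forall>u v. skel_edge P u v \<longrightarrow> card (sphere 0 (1 - d) \<inter> closed_segment u v) = 2) \<and>
     Q = (\<lambda>x. (1 / (1 - d)) *\<^sub>R x) `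
           (\<Union>{sphere 0 (1 - d) \<inter> closed_segment u v | u v. skel_edge P u v})"

text \<open>A Hanoi state (x_1,...,x_k) is the list [x_1,...,x_k].\<close>

definition hanoi_states :: "nat \<Rightarrow> nat \<Rightarrow> nat list set" where
  "hanoi_states r k = {xs. length xs = k \<and> (\<forall>i<k. xs ! i \<le> r) \<and>
                          (\<forall>i. 0 < i \<and> i < k \<longrightarrow> xs ! i \<noteq> xs ! (i - 1))}"

definition adjustment :: "nat \<Rightarrow> nat list \<Rightarrow> nat list \<Rightarrow> bool" where
  "adjustment r xs ys \<longleftrightarrow> (\<exists>c. c \<le> r \<and> c \<noteq> last xs \<and>
       (length xs \<ge> 2 \<longrightarrow> c \<noteq> xs ! (length xs - 2)) \<and>
       ys = butlast xs @ [c])"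

definition swap2 :: "nat \<Rightarrow> nat \<Rightarrow> nat \<Rightarrow> nat" where
  "swap2 a b x = (if x = a then b else if x = b then a else x)"

text \<open>Involution: the longest final segment alternating between x_k and x_(k-1)
  (equivalently, for Hanoi states, consisting only of these two values) has these
  two values swapped.\<close>

definition involution :: "nat list \<Rightarrow> nat list" where
  "involution xs = (let a = last xs; b = xs ! (length xs - 2);
                        P = (\<lambda>x. x = a \<or> x = b); rs = rev xs
                    in rev (map (swap2 a b) (takeWhile P rs) @ dropWhile P rs))"

definition hanoi_move :: "nat \<Rightarrow> nat list \<Rightarrow> nat list \<Rightarrow> bool" where
  "hanoi_move r xs ys \<longleftrightarrow> adjustment r xs ys \<or>
      (length xs \<ge> 2 \<and> ys = involution xs)"

definition hanoi_adj :: "nat \<Rightarrow> nat list \<Rightarrow> nat list \<Rightarrow> bool" where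
  "hanoi_adj r xs ys \<longleftrightarrow> hanoi_move r xs ys \<or> hanoi_move r ys xs"

definition graph_iso :: "'a set \<Rightarrow> ('a \<Rightarrow> 'a \<Rightarrow> bool) \<Rightarrow> 'b set \<Rightarrow> ('b \<Rightarrow> 'b \<Rightarrow> bool) \<Rightarrow> bool" where
  "graph_iso V E W F \<longleftrightarrow> (\<exists>f. bij_betw f V W \<and>
       (\<forall>u\<in>V. \<forall>v\<in>V. E u v \<longleftrightarrow> F (f u) (f v)))"

end

(*
  Call a finite point set P on the unit sphere simple inscribed if it is the vertex set of a
  simple polytope: every vertex u has dim-many neighbours N u whose edge vectors form a basis, and
  the polytope lies in the cone they span at u.  For such P the edges of the convex hull are
  exactly the pairs (u, v) with v in N u.  The r + 1 starting points form a simplex, which is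
  simple inscribed with a complete 1-skeleton, i.e. with 1-skeleton G(r, 1).

  Truncating a simple inscribed polytope cuts every edge [u, v] near u and near v; the cut point
  q u v near u becomes a vertex whose neighbours are q v u and the q u w for the other neighbours
  w of u.  The new point set is again simple inscribed: the hyperplane through the cut points
  near u leaves all other points on the far side, which gives the cone condition at q u v.  So
  the new 1-skeleton is the combinatorial truncation of the old one, whose vertices are the
  directed edges (u, v), (u, v) being adjacent to (u, w) for w ~= v and to (v, u).

  The Hanoi graphs satisfy the same recursion: the state X @ [c] of G(r, k + 1) corresponds to
  the directed edge of G(r, k) from X to its unique neighbour with last entry c, the adjustments
  of the last entry give the edges (X, Y) -- (X, Y'), and the involution gives (X, Y) -- (Y, X).
  Induction on the number of truncations finishes the proof.
*)

theory Submission
  imports Defs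
begin

section \<open>Graph isomorphisms and the truncation of a graph\<close>

lemma graph_iso_sym:
  assumes "graph_iso V E W F"
  shows "graph_iso W F V E"
proof -
  obtain f where f: "bij_betw f V W" and E: "\<forall>u\<in>V. \<forall>v\<in>V. E u v \<longleftrightarrow> F (f u) (f v)"
    using assms unfolding graph_iso_def by blast
  have "bij_betw (inv_into V f) W V"
    by (rule bij_betw_inv_into[OF f])
  moreover have "F x y \<longleftrightarrow> E (inv_into V f x) (inv_into V f y)" if "x \<in> W" "y \<in> W" for x y
    using that E f by (auto simp: bij_betw_def bij_betw_inv_into_right inv_into_into)
  ultimately show ?thesis
    unfolding graph_iso_def by blast
qed

lemma graph_iso_trans:
  assumes "graph_iso U D V E" "graph_iso V E W F"
  shows "graph_iso U D W F"
proof -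
  obtain f where f: "bij_betw f U V" and D: "\<forall>u\<in>U. \<forall>v\<in>U. D u v \<longleftrightarrow> E (f u) (f v)"
    using assms(1) unfolding graph_iso_def by blast
  obtain g where g: "bij_betw g V W" and E: "\<forall>u\<in>V. \<forall>v\<in>V. E u v \<longleftrightarrow> F (g u) (g v)"
    using assms(2) unfolding graph_iso_def by blast
  have "bij_betw (g \<circ> f) U W"
    by (rule bij_betw_trans[OF f g])
  moreover have "D u v \<longleftrightarrow> F ((g \<circ> f) u) ((g \<circ> f) v)" if "u \<in> U" "v \<in> U" for u v
    using that D E bij_betwE[OF f] by auto
  ultimately show ?thesis
    unfolding graph_iso_def by blast
qed

text \<open>The truncation of a graph has the directed edges \<open>(u, v)\<close> as vertices; \<open>(u, v)\<close> is
  adjacent to the other edges leaving \<open>u\<close> and to its reversal \<open>(v, u)\<close>.\<close>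

fun truncated_adj :: "'a \<times> 'a \<Rightarrow> 'a \<times> 'a \<Rightarrow> bool" where
  "truncated_adj (u, v) (u', v') \<longleftrightarrow> (u = u' \<and> v \<noteq> v') \<or> (u' = v \<and> v' = u)"

lemma bij_betw_map_prod_edges:
  assumes f: "bij_betw f V W" and E: "\<And>u v. E u v \<Longrightarrow> u \<in> V \<and> v \<in> V"
    and EF: "\<forall>u\<in>V. \<forall>v\<in>V. E u v \<longleftrightarrow> F (f u) (f v)"
  shows "bij_betw (map_prod f f) {(u, v). E u v} {(x, y). x \<in> W \<and> y \<in> W \<and> F x y}"
proof (rule bij_betwI')
  fix x y
  assume "x \<in> {(u, v). E u v}" "y \<in> {(u, v). E u v}"
  then obtain u v u' v' where "x = (u, v)" "y = (u', v')" "E u v" "E u' v'"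
    by auto
  then show "map_prod f f x = map_prod f f y \<longleftrightarrow> x = y"
    using E[of u v] E[of u' v'] f by (auto simp: bij_betw_def inj_on_eq_iff)
next
  fix x
  assume "x \<in> {(u, v). E u v}"
  then obtain u v where "x = (u, v)" "E u v"
    by auto
  then show "map_prod f f x \<in> {(x, y). x \<in> W \<and> y \<in> W \<and> F x y}"
    using E[of u v] EF bij_betwE[OF f] by auto
next
  fix y
  assume "y \<in> {(x, y). x \<in> W \<and> y \<in> W \<and> F x y}"
  then obtain a b where y: "y = (a, b)" "a \<in> W" "b \<in> W" "F a b"
    by auto
  then obtain u v where "u \<in> V" "v \<in> V" "a = f u" "b = f v"
    using f by (metis bij_betw_imp_surj_on imageE)
  then show "\<exists>x\<in>{(u, v). E u v}. y = map_prod f f x"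
    using y EF by auto
qed

lemma graph_iso_truncation:
  assumes iso: "graph_iso V E W F" and E: "\<And>u v. E u v \<Longrightarrow> u \<in> V \<and> v \<in> V"
  shows "graph_iso {(u, v). E u v} truncated_adj {(x, y). x \<in> W \<and> y \<in> W \<and> F x y} truncated_adj"
proof -
  obtain f where f: "bij_betw f V W" and EF: "\<forall>u\<in>V. \<forall>v\<in>V. E u v \<longleftrightarrow> F (f u) (f v)"
    using iso unfolding graph_iso_def by blast
  have inj: "f u = f v \<longleftrightarrow> u = v" if "u \<in> V" "v \<in> V" for u v
    using f that by (metis bij_betw_imp_inj_on inj_on_eq_iff)
  have "truncated_adj x y \<longleftrightarrow> truncated_adj (map_prod f f x) (map_prod f f y)"
    if xy: "x \<in> {(u, v). E u v}" "y \<in> {(u, v). E u v}" for x y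
  proof -
    obtain u v u' v' where "x = (u, v)" "y = (u', v')" "E u v" "E u' v'"
      using xy by auto
    then show ?thesis
      using E[of u v] E[of u' v'] inj[of u u'] inj[of v v'] inj[of u' v] inj[of v' u] by auto
  qed
  then show ?thesis
    using bij_betw_map_prod_edges[OF f E EF] unfolding graph_iso_def by blast
qed

section \<open>Hanoi graphs\<close>

lemma mem_hanoi_states:
  "xs \<in> hanoi_states r k \<longleftrightarrow> length xs = k \<and> set xs \<subseteq> {..r} \<and> distinct_adj xs"
  unfolding hanoi_states_def distinct_adj_conv_nth
  by (auto simp: subset_eq all_set_conv_all_nth) (metis Suc_pred diff_Suc_1 gr0_conv_Suc)+

lemma append_mem_hanoi_states:
  assumes "1 \<le> k"
  shows "X @ [c] \<in> hanoi_states r (Suc k) \<longleftrightarrow> X \<in> hanoi_states r k \<and> c \<le> r \<and> c \<noteq> last X"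
  using assms by (cases X rule: rev_cases) (auto simp: mem_hanoi_states distinct_adj_append_iff)

lemma obtain_append_two:
  assumes "2 \<le> length xs"
  obtains ys b a where "xs = ys @ [b, a]"
proof -
  obtain zs a where zs: "xs = zs @ [a]"
    using assms by (cases xs rule: rev_cases) auto
  moreover obtain ys b where "zs = ys @ [b]"
    using assms zs by (cases zs rule: rev_cases) auto
  ultimately show ?thesis
    using that by simp
qed

lemma list_eq_iff_butlast_last:
  "xs \<noteq> [] \<Longrightarrow> ys \<noteq> [] \<Longrightarrow> xs = ys \<longleftrightarrow> butlast xs = butlast ys \<and> last xs = last ys"
  by (cases xs rule: rev_cases; cases ys rule: rev_cases) auto

lemma swap2_swap2 [simp]: "swap2 a b (swap2 a b x) = x"
  by (simp add: swap2_def)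

text \<open>On the reversed state, the involution is \<open>swap_prefix\<close> of the last two entries.\<close>

definition swap_prefix :: "nat \<Rightarrow> nat \<Rightarrow> nat list \<Rightarrow> nat list" where
  "swap_prefix a b xs =
     map (swap2 a b) (takeWhile (\<lambda>x. x = a \<or> x = b) xs) @ dropWhile (\<lambda>x. x = a \<or> x = b) xs"

lemma swap_prefix_Nil [simp]: "swap_prefix a b [] = []"
  by (simp add: swap_prefix_def)

lemma swap_prefix_Cons [simp]:
  "swap_prefix a b (x # xs) =
     (if x = a \<or> x = b then swap2 a b x # swap_prefix a b xs else x # xs)"
  by (simp add: swap_prefix_def)

lemma involution_append_two: "involution (ys @ [b, a]) = rev (swap_prefix a b (rev ys)) @ [a, b]"
  by (simp add: involution_def swap_prefix_def Let_def nth_append swap2_def)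

lemma length_swap_prefix [simp]: "length (swap_prefix a b xs) = length xs"
  by (induction xs) auto

lemma swap_prefix_commute: "swap_prefix b a xs = swap_prefix a b xs"
  by (induction xs) (auto simp: swap2_def)

lemma swap_prefix_swap_prefix [simp]: "swap_prefix a b (swap_prefix a b xs) = xs"
  by (induction xs) (auto simp: swap2_def)

lemma set_swap_prefix: "set (swap_prefix a b xs) \<subseteq> insert a (insert b (set xs))"
  by (induction xs) (auto simp: swap2_def)

lemma distinct_adj_swap_prefix: "distinct_adj xs \<Longrightarrow> distinct_adj (swap_prefix a b xs)"
proof (induction xs)
  case (Cons x xs)
  then show ?case
    by (cases xs) (auto simp: swap2_def)
qed simp

lemma swap_prefix_eq_Nil_iff [simp]: "swap_prefix a b xs = [] \<longleftrightarrow> xs = []"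
  by (cases xs) auto

lemma hd_swap_prefix: "xs \<noteq> [] \<Longrightarrow> hd xs \<noteq> b \<Longrightarrow> a \<noteq> b \<Longrightarrow> hd (swap_prefix a b xs) \<noteq> a"
  by (cases xs) (auto simp: swap2_def)

lemma involution_hanoi_state:
  assumes X: "X \<in> hanoi_states r k" and k: "2 \<le> k"
  shows "involution X \<in> hanoi_states r k" and "involution (involution X) = X"
proof -
  obtain ys b a where X_eq: "X = ys @ [b, a]"
    using X k by (auto simp: mem_hanoi_states elim: obtain_append_two)
  define L where "L = swap_prefix a b (rev ys)"
  have inv: "involution X = rev L @ [a, b]"
    by (simp add: X_eq L_def involution_append_two)
  have ab: "a \<noteq> b" and ys: "distinct_adj ys" "ys \<noteq> [] \<Longrightarrow> last ys \<noteq> b"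
    and r: "a \<le> r" "b \<le> r" "set ys \<subseteq> {..r}"
    using X by (auto simp: X_eq mem_hanoi_states distinct_adj_append_iff)
  have "L \<noteq> [] \<Longrightarrow> hd L \<noteq> a"
    using hd_swap_prefix[of "rev ys" b a] ys(2) ab by (simp add: L_def hd_rev)
  moreover have "distinct_adj L"
    using distinct_adj_swap_prefix ys(1) by (simp add: L_def)
  ultimately have "distinct_adj (b # a # L)"
    using ab by (cases L) auto
  then have "distinct_adj (rev L @ [a, b])"
    using distinct_adj_rev[of "b # a # L"] by simp
  moreover have "set L \<subseteq> {..r}"
    using set_swap_prefix[of a b "rev ys"] r by (auto simp: L_def)
  ultimately show "involution X \<in> hanoi_states r k"
    using X r unfolding inv by (auto simp: X_eq mem_hanoi_states L_def)
  show "involution (involution X) = X"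
    unfolding inv involution_append_two by (simp add: X_eq L_def swap_prefix_commute[of b a])
qed

text \<open>Lists are indexed from 0, so \<open>X ! (k - 2)\<close> is the entry \<open>x\<^sub>k\<^sub>-\<^sub>1\<close> of a state of length \<open>k\<close>.\<close>

lemma nth_butlast_last_neq:
  assumes "X \<in> hanoi_states r k" "2 \<le> k"
  shows "X ! (k - 2) \<noteq> last X"
proof -
  obtain ys b a where "X = ys @ [b, a]"
    using assms by (auto simp: mem_hanoi_states elim: obtain_append_two)
  then show ?thesis
    using assms by (auto simp: mem_hanoi_states nth_append distinct_adj_append_iff)
qed

lemma last_neq_nth_if_butlast_eq:
  assumes Y: "Y \<in> hanoi_states r k" and k: "2 \<le> k" and XY: "butlast X = butlast Y"
  shows "last Y \<noteq> X ! (k - 2)"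
proof -
  have "k - 2 < length (butlast X)" "k - 2 < length (butlast Y)"
    using Y k XY by (auto simp: mem_hanoi_states)
  then have "X ! (k - 2) = Y ! (k - 2)"
    using XY nth_butlast[of "k - 2" X] nth_butlast[of "k - 2" Y] by simp
  then show ?thesis
    using nth_butlast_last_neq[OF Y k] by simp
qed

lemma last_involution:
  assumes "X \<in> hanoi_states r k" "2 \<le> k"
  shows "last (involution X) = X ! (k - 2)"
proof -
  obtain ys b a where "X = ys @ [b, a]"
    using assms by (auto simp: mem_hanoi_states elim: obtain_append_two)
  then show ?thesis
    using assms by (auto simp: mem_hanoi_states nth_append involution_append_two)
qed

lemma last_le_if_mem_hanoi_states:
  assumes "X \<in> hanoi_states r k" "1 \<le> k"
  shows "last X \<le> r"
proof -
  have "X \<noteq> []"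
    using assms by (auto simp: mem_hanoi_states)
  then have "last X \<in> set X"
    by (rule last_in_set)
  then show ?thesis
    using assms by (auto simp: mem_hanoi_states)
qed

lemma adjustment_iff:
  assumes X: "X \<in> hanoi_states r k" and Y: "Y \<in> hanoi_states r k" and k: "1 \<le> k"
  shows "adjustment r X Y \<longleftrightarrow> X \<noteq> Y \<and> butlast X = butlast Y"
proof
  assume "adjustment r X Y"
  then obtain c where "c \<noteq> last X" "Y = butlast X @ [c]"
    unfolding adjustment_def by blast
  then have "last Y \<noteq> last X" "butlast Y = butlast X"
    by simp_all
  then show "X \<noteq> Y \<and> butlast X = butlast Y"
    by auto
next
  assume XY: "X \<noteq> Y \<and> butlast X = butlast Y"
  have "X \<noteq> []" "Y \<noteq> []" "length X = k" "last Y \<in> {..r}"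
    using X Y k last_le_if_mem_hanoi_states[OF Y k] by (auto simp: mem_hanoi_states)
  moreover have "last Y \<noteq> X ! (k - 2)" if "2 \<le> k"
    using last_neq_nth_if_butlast_eq[OF Y that] XY by simp
  moreover have "Y = butlast X @ [last Y]" "last Y \<noteq> last X"
    using XY \<open>X \<noteq> []\<close> \<open>Y \<noteq> []\<close> list_eq_iff_butlast_last[of X Y] by auto
  ultimately show "adjustment r X Y"
    unfolding adjustment_def by (intro exI[of _ "last Y"]) auto
qed

lemma hanoi_adj_iff:
  assumes X: "X \<in> hanoi_states r k" and Y: "Y \<in> hanoi_states r k" and k: "1 \<le> k"
  shows "hanoi_adj r X Y \<longleftrightarrow> (X \<noteq> Y \<and> butlast X = butlast Y) \<or> (2 \<le> k \<and> Y = involution X)"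
proof -
  have "length X = k" "length Y = k"
    using X Y by (auto simp: mem_hanoi_states)
  moreover have "X = involution Y \<longleftrightarrow> Y = involution X" if "2 \<le> k"
    using involution_hanoi_state(2)[OF X that] involution_hanoi_state(2)[OF Y that] by auto
  ultimately show ?thesis
    unfolding hanoi_adj_def hanoi_move_def adjustment_iff[OF X Y k] adjustment_iff[OF Y X k] by auto
qed

lemma hanoi_adj_commute: "hanoi_adj r X Y \<longleftrightarrow> hanoi_adj r Y X"
  by (auto simp: hanoi_adj_def)

lemma last_neq_if_hanoi_adj:
  assumes X: "X \<in> hanoi_states r k" and Y: "Y \<in> hanoi_states r k" and k: "1 \<le> k"
    and XY: "hanoi_adj r X Y"
  shows "last Y \<noteq> last X"
proof -
  have "X \<noteq> []" "Y \<noteq> []"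
    using X Y k by (auto simp: mem_hanoi_states)
  then have "X \<noteq> Y \<and> butlast X = butlast Y \<Longrightarrow> last Y \<noteq> last X"
    using list_eq_iff_butlast_last[of X Y] by auto
  then show ?thesis
    using XY hanoi_adj_iff[OF X Y k] last_involution[OF X] nth_butlast_last_neq[OF X] by auto
qed

definition hanoi_neighbour :: "nat list \<Rightarrow> nat \<Rightarrow> nat list" where
  "hanoi_neighbour X c =
     (if 2 \<le> length X \<and> c = X ! (length X - 2) then involution X else butlast X @ [c])"

lemma butlast_append_mem_hanoi_states:
  assumes X: "X \<in> hanoi_states r k" and k: "1 \<le> k" and c: "c \<le> r" "2 \<le> k \<Longrightarrow> c \<noteq> X ! (k - 2)"
  shows "butlast X @ [c] \<in> hanoi_states r k"
proof (cases "k = 1")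
  case True
  then show ?thesis
    using X c by (auto simp: mem_hanoi_states length_Suc_conv)
next
  case False
  then have "2 \<le> length X"
    using X k by (simp add: mem_hanoi_states)
  then obtain ys b a where X_eq: "X = ys @ [b, a]"
    by (rule obtain_append_two)
  moreover have "c \<noteq> b"
    using c(2) X X_eq False k by (auto simp: mem_hanoi_states nth_append)
  ultimately show ?thesis
    using X c(1) by (auto simp: mem_hanoi_states distinct_adj_append_iff butlast_append)
qed

lemma hanoi_neighbour:
  assumes X: "X \<in> hanoi_states r k" and k: "1 \<le> k" and c: "c \<le> r" "c \<noteq> last X"
  shows "hanoi_neighbour X c \<in> hanoi_states r k"
    and "hanoi_adj r X (hanoi_neighbour X c)"
    and "last (hanoi_neighbour X c) = c"
proof -
  have L: "length X = k"
    using X by (simp add: mem_hanoi_states)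
  have "hanoi_neighbour X c \<in> hanoi_states r k \<and> hanoi_adj r X (hanoi_neighbour X c) \<and>
    last (hanoi_neighbour X c) = c"
  proof (cases "2 \<le> k \<and> c = X ! (k - 2)")
    case True
    then have Y: "hanoi_neighbour X c = involution X"
      using L by (simp add: hanoi_neighbour_def)
    then show ?thesis
      using involution_hanoi_state(1)[OF X] last_involution[OF X] hanoi_adj_iff[OF X _ k] True by simp
  next
    case False
    then have Y: "hanoi_neighbour X c = butlast X @ [c]"
      using L by (auto simp: hanoi_neighbour_def)
    have "butlast X @ [c] \<in> hanoi_states r k"
      using butlast_append_mem_hanoi_states[OF X k c(1)] False by blast
    moreover have "X \<noteq> butlast X @ [c]"
      using c(2) by (metis last_snoc)
    ultimately show ?thesis
      using Y hanoi_adj_iff[OF X _ k] by simp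
  qed
  then show "hanoi_neighbour X c \<in> hanoi_states r k" "hanoi_adj r X (hanoi_neighbour X c)"
    "last (hanoi_neighbour X c) = c"
    by simp_all
qed

lemma hanoi_neighbour_last:
  assumes X: "X \<in> hanoi_states r k" and Y: "Y \<in> hanoi_states r k" and k: "1 \<le> k"
    and XY: "hanoi_adj r X Y"
  shows "hanoi_neighbour X (last Y) = Y"
proof -
  have L: "length X = k" "Y \<noteq> []"
    using X Y k by (auto simp: mem_hanoi_states)
  consider (adjustment) "X \<noteq> Y" "butlast X = butlast Y" | (involution) "2 \<le> k" "Y = involution X"
    using XY unfolding hanoi_adj_iff[OF X Y k] by blast
  then show ?thesis
  proof cases
    case adjustment
    then show ?thesis
      using last_neq_nth_if_butlast_eq[OF Y] L by (auto simp: hanoi_neighbour_def)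
  next
    case involution
    then show ?thesis
      using last_involution[OF X] L by (simp add: hanoi_neighbour_def)
  qed
qed

lemma involution_append:
  assumes X: "X \<in> hanoi_states r k" and k: "1 \<le> k" and c: "c \<noteq> last X"
  shows "involution (X @ [c]) = hanoi_neighbour X c @ [last X]"
proof (cases "k = 1")
  case True
  then obtain x where "X = [x]"
    using X by (auto simp: mem_hanoi_states length_Suc_conv)
  then show ?thesis
    using involution_append_two[of "[]" x c] by (simp add: hanoi_neighbour_def)
next
  case False
  then have "2 \<le> length X"
    using X k by (simp add: mem_hanoi_states)
  then obtain ys b a where X_eq: "X = ys @ [b, a]"
    by (rule obtain_append_two)
  have "a \<noteq> b"
    using X by (auto simp: X_eq mem_hanoi_states distinct_adj_append_iff)
  then show ?thesis
    using involution_append_two[of "ys @ [b]" a c] involution_append_two[of ys b a] c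
    by (auto simp: X_eq hanoi_neighbour_def nth_append butlast_append swap2_def swap_prefix_commute[of b a])
qed

text \<open>Hence \<open>G(r, k + 1)\<close> is the truncation of \<open>G(r, k)\<close>: the state \<open>X @ [c]\<close> stands for the
  directed edge from \<open>X\<close> to \<open>hanoi_neighbour X c\<close>.\<close>

lemma hanoi_adj_append_iff:
  assumes X: "X \<in> hanoi_states r k" and X': "X' \<in> hanoi_states r k" and k: "1 \<le> k"
    and c: "c \<le> r" "c \<noteq> last X" and c': "c' \<le> r" "c' \<noteq> last X'"
  shows "hanoi_adj r (X @ [c]) (X' @ [c']) \<longleftrightarrow>
    (X = X' \<and> c \<noteq> c') \<or> (X' = hanoi_neighbour X c \<and> c' = last X)"
proof -
  have "X @ [c] \<in> hanoi_states r (Suc k)" "X' @ [c'] \<in> hanoi_states r (Suc k)"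
    using append_mem_hanoi_states[OF k] X X' c c' by blast+
  then have "hanoi_adj r (X @ [c]) (X' @ [c']) \<longleftrightarrow>
    (X @ [c] \<noteq> X' @ [c'] \<and> X = X') \<or> X' @ [c'] = involution (X @ [c])"
    using hanoi_adj_iff k by simp
  then show ?thesis
    unfolding involution_append[OF X k c(2)] by auto
qed

lemma bij_betw_hanoi_append_last:
  assumes k: "1 \<le> k"
  shows "bij_betw (\<lambda>(X, Y). X @ [last Y])
    {(X, Y). X \<in> hanoi_states r k \<and> Y \<in> hanoi_states r k \<and> hanoi_adj r X Y} (hanoi_states r (Suc k))"
proof (rule bij_betwI')
  fix e e'
  assume "e \<in> {(X, Y). X \<in> hanoi_states r k \<and> Y \<in> hanoi_states r k \<and> hanoi_adj r X Y}"
    "e' \<in> {(X, Y). X \<in> hanoi_states r k \<and> Y \<in> hanoi_states r k \<and> hanoi_adj r X Y}"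
  then show "(case e of (X, Y) \<Rightarrow> X @ [last Y]) = (case e' of (X, Y) \<Rightarrow> X @ [last Y]) \<longleftrightarrow> e = e'"
    using hanoi_neighbour_last[OF _ _ k] by (cases e, cases e') fastforce
next
  fix e
  assume "e \<in> {(X, Y). X \<in> hanoi_states r k \<and> Y \<in> hanoi_states r k \<and> hanoi_adj r X Y}"
  then show "(case e of (X, Y) \<Rightarrow> X @ [last Y]) \<in> hanoi_states r (Suc k)"
    using append_mem_hanoi_states[OF k] last_le_if_mem_hanoi_states[OF _ k] last_neq_if_hanoi_adj[OF _ _ k]
    by auto
next
  fix Z
  assume Z: "Z \<in> hanoi_states r (Suc k)"
  then obtain X c where "Z = X @ [c]"
    by (cases Z rule: rev_cases) (auto simp: mem_hanoi_states)
  then have "Z = X @ [c]" "X \<in> hanoi_states r k" "c \<le> r" "c \<noteq> last X"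
    using Z append_mem_hanoi_states[OF k] by auto
  then show "\<exists>e\<in>{(X, Y). X \<in> hanoi_states r k \<and> Y \<in> hanoi_states r k \<and> hanoi_adj r X Y}.
    Z = (case e of (X, Y) \<Rightarrow> X @ [last Y])"
    using hanoi_neighbour[OF _ k] by (intro bexI[of _ "(X, hanoi_neighbour X c)"]) auto
qed

lemma graph_iso_hanoi_Suc:
  assumes k: "1 \<le> k"
  shows "graph_iso {(X, Y). X \<in> hanoi_states r k \<and> Y \<in> hanoi_states r k \<and> hanoi_adj r X Y}
    truncated_adj (hanoi_states r (Suc k)) (hanoi_adj r)"
  unfolding graph_iso_def
proof (intro exI conjI ballI)
  show "bij_betw (\<lambda>(X, Y). X @ [last Y])
    {(X, Y). X \<in> hanoi_states r k \<and> Y \<in> hanoi_states r k \<and> hanoi_adj r X Y} (hanoi_states r (Suc k))"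
    by (rule bij_betw_hanoi_append_last[OF k])
  fix e e'
  assume "e \<in> {(X, Y). X \<in> hanoi_states r k \<and> Y \<in> hanoi_states r k \<and> hanoi_adj r X Y}"
    "e' \<in> {(X, Y). X \<in> hanoi_states r k \<and> Y \<in> hanoi_states r k \<and> hanoi_adj r X Y}"
  then obtain X Y X' Y' where e: "e = (X, Y)" "e' = (X', Y')"
    and H: "X \<in> hanoi_states r k" "Y \<in> hanoi_states r k" "X' \<in> hanoi_states r k" "Y' \<in> hanoi_states r k"
    and adj: "hanoi_adj r X Y" "hanoi_adj r X' Y'"
    by auto
  have nbr: "hanoi_neighbour X (last Y) = Y" "hanoi_neighbour X' (last Y') = Y'"
    using hanoi_neighbour_last[OF _ _ k] H adj by blast+
  have "hanoi_adj r (X @ [last Y]) (X' @ [last Y']) \<longleftrightarrow>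
    (X = X' \<and> last Y \<noteq> last Y') \<or> (X' = Y \<and> last Y' = last X)"
    using hanoi_adj_append_iff[OF H(1,3) k] last_le_if_mem_hanoi_states[OF _ k]
      last_neq_if_hanoi_adj[OF _ _ k] H adj nbr(1) by simp
  also have "\<dots> \<longleftrightarrow> truncated_adj (X, Y) (X', Y')"
    using nbr hanoi_neighbour_last[OF H(2,1) k] adj(1) hanoi_adj_commute by auto
  finally show "truncated_adj e e' \<longleftrightarrow> hanoi_adj r ((\<lambda>(X, Y). X @ [last Y]) e) ((\<lambda>(X, Y). X @ [last Y]) e')"
    using e by simp
qed

lemma graph_iso_hanoi_one:
  assumes V: "finite V" "card V = Suc r" and E: "\<And>u v. E u v \<longleftrightarrow> u \<in> V \<and> v \<in> V \<and> u \<noteq> v"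
  shows "graph_iso V E (hanoi_states r 1) (hanoi_adj r)"
proof -
  obtain h where h: "bij_betw h V {..r}"
    using ex_bij_betw_finite_nat[OF V(1)] V(2) by (auto simp: atLeast0LessThan lessThan_Suc_atMost)
  have one: "hanoi_states r 1 = (\<lambda>c. [c]) ` {..r}"
    by (auto simp: mem_hanoi_states length_Suc_conv)
  have "bij_betw (\<lambda>c. [c]) {..r} (hanoi_states r 1)"
    unfolding one by (rule bij_betw_imageI) (auto simp: inj_on_def)
  then have "bij_betw (\<lambda>x. [h x]) V (hanoi_states r 1)"
    using bij_betw_trans[OF h] by (simp add: comp_def)
  moreover have "E u v \<longleftrightarrow> hanoi_adj r [h u] [h v]" if "u \<in> V" "v \<in> V" for u v
  proof -
    have "[h u] \<in> hanoi_states r 1" "[h v] \<in> hanoi_states r 1"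
      using that bij_betwE[OF h] by (auto simp: mem_hanoi_states)
    then have "hanoi_adj r [h u] [h v] \<longleftrightarrow> h u \<noteq> h v"
      using hanoi_adj_iff by simp
    also have "\<dots> \<longleftrightarrow> u \<noteq> v"
      using h that by (metis bij_betw_imp_inj_on inj_on_eq_iff)
    finally show ?thesis
      using E that by simp
  qed
  ultimately show ?thesis
    unfolding graph_iso_def by blast
qed


section \<open>Simple polytopes inscribed in the unit sphere\<close>

lemma norm_convex_combination_sq:
  fixes a b :: "'a::real_inner"
  shows "(norm ((1 - t) *\<^sub>R a + t *\<^sub>R b))\<^sup>2 =
    (1 - t) * (norm a)\<^sup>2 + t * (norm b)\<^sup>2 - t * (1 - t) * (norm (a - b))\<^sup>2"
  by (simp add: power2_norm_eq_inner inner_add_left inner_add_right inner_diff_left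
      inner_diff_right inner_commute algebra_simps)

lemma notin_open_segment_if_norm_le:
  fixes a b x :: "'a::real_inner"
  assumes "norm a \<le> 1" "norm b \<le> 1" "norm x = 1"
  shows "x \<notin> open_segment a b"
proof
  assume "x \<in> open_segment a b"
  then obtain t where ab: "a \<noteq> b" and t: "0 < t" "t < 1" and x: "x = (1 - t) *\<^sub>R a + t *\<^sub>R b"
    unfolding in_segment by blast
  have "(1 - t) * (norm a)\<^sup>2 \<le> 1 - t" "t * (norm b)\<^sup>2 \<le> t"
    using assms t by (auto intro!: mult_left_le simp: power_le_one)
  moreover have "0 < t * (1 - t) * (norm (a - b))\<^sup>2"
    using ab t by simp
  ultimately have "(norm x)\<^sup>2 < 1"
    unfolding x norm_convex_combination_sq by linarith
  then show False
    using assms(3) by simp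
qed

lemma convex_hull_sphere_subset_cball:
  fixes P :: "'a::real_normed_vector set"
  shows "P \<subseteq> sphere 0 1 \<Longrightarrow> convex hull P \<subseteq> cball 0 1"
  by (rule hull_minimal) (auto simp: convex_cball)

lemma extreme_point_of_convex_hull_sphere:
  fixes P :: "'a::real_inner set"
  assumes "P \<subseteq> sphere 0 1" "x \<in> P"
  shows "x extreme_point_of (convex hull P)"
  unfolding extreme_point_of_def
proof (intro conjI ballI)
  show "x \<in> convex hull P"
    using assms(2) by (rule hull_inc)
  fix a b
  assume "a \<in> convex hull P" "b \<in> convex hull P"
  then have "norm a \<le> 1" "norm b \<le> 1"
    using convex_hull_sphere_subset_cball[OF assms(1)] by auto
  moreover have "norm x = 1"
    using assms by auto
  ultimately show "x \<notin> open_segment a b"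
    by (rule notin_open_segment_if_norm_le)
qed

lemma skel_vertices_sphere:
  fixes P :: "'a::euclidean_space set"
  assumes "P \<subseteq> sphere 0 1"
  shows "{x. skel_vertex P x} = P"
  using extreme_point_of_convex_hull extreme_point_of_convex_hull_sphere[OF assms]
  unfolding skel_vertex_def by blast

lemma extreme_point_in_closed_segment:
  assumes "w extreme_point_of S" "u \<in> S" "v \<in> S" "w \<in> closed_segment u v"
  shows "w = u \<or> w = v"
  using assms unfolding extreme_point_of_def open_segment_def by blast

lemma skel_edge_commute: "skel_edge P u v \<longleftrightarrow> skel_edge P v u"
  by (auto simp: skel_edge_def closed_segment_commute)

lemma skel_edge_mem:
  assumes "skel_edge P u v"
  shows "u \<in> P" "v \<in> P"
proof -
  have "closed_segment u v face_of convex hull P"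
    using assms by (simp add: skel_edge_def)
  then have "u extreme_point_of convex hull P" "v extreme_point_of convex hull P"
    using extreme_point_of_face extreme_point_of_segment by blast+
  then show "u \<in> P" "v \<in> P"
    using extreme_point_of_convex_hull by auto
qed

lemma skel_edge_supporting_hyperplane:
  fixes P :: "'a::euclidean_space set"
  assumes "finite P" "skel_edge P u v"
  obtains c d where "convex hull P \<subseteq> {x. c \<bullet> x \<le> d}"
    "closed_segment u v = convex hull P \<inter> {x. c \<bullet> x = d}"
proof -
  have "closed_segment u v face_of convex hull P"
    using assms(2) by (simp add: skel_edge_def)
  then have "closed_segment u v exposed_face_of convex hull P"
    using exposed_face_of_polyhedron[OF polyhedron_convex_hull[OF assms(1)]] by simp
  then show ?thesis
    using that unfolding exposed_face_of_def by blast
qed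

definition cone_at :: "'a::real_vector \<Rightarrow> 'a set \<Rightarrow> 'a set" where
  "cone_at u S = {x. \<exists>\<mu>. (\<forall>w\<in>S. 0 \<le> \<mu> w) \<and> x - u = (\<Sum>w\<in>S. \<mu> w *\<^sub>R (w - u))}"

lemma convex_cone_at: "convex (cone_at u S)"
  unfolding convex_def
proof (intro ballI allI impI)
  fix x y and a b :: real
  assume "x \<in> cone_at u S" "y \<in> cone_at u S" and ab: "0 \<le> a" "0 \<le> b" "a + b = 1"
  then obtain \<mu> \<nu> where \<mu>: "\<forall>w\<in>S. 0 \<le> \<mu> w" "x - u = (\<Sum>w\<in>S. \<mu> w *\<^sub>R (w - u))"
    and \<nu>: "\<forall>w\<in>S. 0 \<le> \<nu> w" "y - u = (\<Sum>w\<in>S. \<nu> w *\<^sub>R (w - u))"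
    unfolding cone_at_def by auto
  have "a *\<^sub>R x + b *\<^sub>R y - u = a *\<^sub>R (x - u) + b *\<^sub>R (y - u)"
    using ab by (simp add: algebra_simps flip: scaleR_add_left)
  also have "\<dots> = (\<Sum>w\<in>S. (a * \<mu> w + b * \<nu> w) *\<^sub>R (w - u))"
    unfolding \<mu> \<nu> by (simp add: scaleR_sum_right sum.distrib scaleR_add_left)
  finally show "a *\<^sub>R x + b *\<^sub>R y \<in> cone_at u S"
    unfolding cone_at_def using \<mu>(1) \<nu>(1) ab by (auto intro!: exI[of _ "\<lambda>w. a * \<mu> w + b * \<nu> w"])
qed

lemma mem_cone_at_insert_image:
  assumes inj: "inj_on f S" and fin: "finite S" and notin: "b \<notin> f ` S"
    and c: "\<And>w. w \<in> S \<Longrightarrow> 0 \<le> c w" and c0: "0 \<le> c0"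
    and x: "x - a = (\<Sum>w\<in>S. c w *\<^sub>R (f w - a)) + c0 *\<^sub>R (b - a)"
  shows "x \<in> cone_at a (insert b (f ` S))"
proof -
  define \<nu> where "\<nu> y = (if y = b then c0 else c (inv_into S f y))" for y
  have "(\<Sum>y\<in>f ` S. \<nu> y *\<^sub>R (y - a)) = (\<Sum>w\<in>S. \<nu> (f w) *\<^sub>R (f w - a))"
    by (rule sum.reindex[OF inj, unfolded comp_def])
  also have "\<dots> = (\<Sum>w\<in>S. c w *\<^sub>R (f w - a))"
  proof (rule sum.cong)
    fix w
    assume w: "w \<in> S"
    then have "f w \<noteq> b"
      using notin by (metis imageI)
    then show "\<nu> (f w) *\<^sub>R (f w - a) = c w *\<^sub>R (f w - a)"
      by (simp add: \<nu>_def inv_into_f_f[OF inj w])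
  qed simp
  finally have "(\<Sum>y\<in>insert b (f ` S). \<nu> y *\<^sub>R (y - a)) = x - a"
    using fin notin x by (simp add: \<nu>_def)
  moreover have "0 \<le> \<nu> y" if "y \<in> insert b (f ` S)" for y
    using that c0 c[OF inv_into_into[of y f S]] by (auto simp: \<nu>_def)
  ultimately show ?thesis
    unfolding cone_at_def by (intro CollectI exI[of _ \<nu>] conjI ballI) simp_all
qed

lemma coeff_eq_0_if_independent_diff:
  fixes u :: "'a::euclidean_space"
  assumes "independent ((\<lambda>w. w - u) ` S)" "(\<Sum>w\<in>S. c w *\<^sub>R (w - u)) = 0" "w \<in> S"
  shows "c w = 0"
proof -
  have inj: "inj_on (\<lambda>w. w - u) S"
    by (auto simp: inj_on_def)
  define d where "d b = c (b + u)" for b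
  have "(\<Sum>b\<in>(\<lambda>w. w - u) ` S. d b *\<^sub>R b) = 0"
    using assms(2) by (simp add: sum.reindex[OF inj] d_def)
  then have "\<forall>b\<in>(\<lambda>w. w - u) ` S. d b = 0"
    using assms(1) unfolding independent_explicit by blast
  then show ?thesis
    using assms(3) by (auto simp: d_def)
qed

lemma cone_at_open_segment_ray:
  fixes u :: "'a::euclidean_space"
  assumes S: "finite S" "independent ((\<lambda>w. w - u) ` S)" and v: "v \<in> S"
    and ab: "a \<in> cone_at u S" "b \<in> cone_at u S"
    and x: "x \<in> open_segment a b" "x - u = s *\<^sub>R (v - u)"
  shows "\<exists>\<alpha>\<ge>0. a - u = \<alpha> *\<^sub>R (v - u)"
proof -
  obtain \<mu>a where \<mu>a: "\<forall>w\<in>S. 0 \<le> \<mu>a w" "a - u = (\<Sum>w\<in>S. \<mu>a w *\<^sub>R (w - u))"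
    using ab(1) unfolding cone_at_def by blast
  obtain \<mu>b where \<mu>b: "\<forall>w\<in>S. 0 \<le> \<mu>b w" "b - u = (\<Sum>w\<in>S. \<mu>b w *\<^sub>R (w - u))"
    using ab(2) unfolding cone_at_def by blast
  obtain t where t: "0 < t" "t < 1" and xt: "x = (1 - t) *\<^sub>R a + t *\<^sub>R b"
    using x(1) unfolding in_segment by blast
  have "(\<Sum>w\<in>S. ((1 - t) * \<mu>a w + t * \<mu>b w) *\<^sub>R (w - u)) = (1 - t) *\<^sub>R (a - u) + t *\<^sub>R (b - u)"
    unfolding \<mu>a \<mu>b by (simp add: scaleR_sum_right sum.distrib scaleR_add_left)
  also have "\<dots> = x - u"
    using xt by (simp add: algebra_simps)
  also have "\<dots> = (\<Sum>w\<in>S. (if w = v then s else 0) *\<^sub>R (w - u))"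
    using x(2) S(1) v by (simp add: sum.remove[of S v] sum.neutral)
  finally have "(\<Sum>w\<in>S. ((1 - t) * \<mu>a w + t * \<mu>b w - (if w = v then s else 0)) *\<^sub>R (w - u)) = 0"
    by (simp add: scaleR_diff_left sum_subtractf)
  from coeff_eq_0_if_independent_diff[OF S(2) this]
  have "(1 - t) * \<mu>a w + t * \<mu>b w = 0" if "w \<in> S" "w \<noteq> v" for w
    using that by simp
  then have "\<mu>a w = 0" if "w \<in> S" "w \<noteq> v" for w
    using that \<mu>a(1) \<mu>b(1) t
    by (smt (verit, best) mult_nonneg_nonneg mult_pos_pos)
  then have "a - u = \<mu>a v *\<^sub>R (v - u)"
    using \<mu>a(2) S(1) v by (simp add: sum.remove[of S v] sum.neutral)
  then show ?thesis
    using \<mu>a(1) v by blast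
qed

lemma eq_apex_if_cone_at_nonneg:
  fixes c u :: "'a::real_inner"
  assumes "finite S" "\<forall>w\<in>S. c \<bullet> (w - u) < 0" "x \<in> cone_at u S" "0 \<le> c \<bullet> (x - u)"
  shows "x = u"
proof -
  obtain \<mu> where \<mu>: "\<forall>w\<in>S. 0 \<le> \<mu> w" "x - u = (\<Sum>w\<in>S. \<mu> w *\<^sub>R (w - u))"
    using assms(3) unfolding cone_at_def by blast
  define g where "g w = \<mu> w * - (c \<bullet> (w - u))" for w
  have nonneg: "0 \<le> g w" if "w \<in> S" for w
    using that \<mu>(1) assms(2) by (simp add: g_def mult_nonneg_nonpos less_imp_le)
  have "sum g S = - (c \<bullet> (x - u))"
    unfolding \<mu>(2) g_def by (simp add: inner_sum_right sum_negf)
  moreover have "0 \<le> sum g S"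
    using nonneg by (simp add: sum_nonneg)
  ultimately have "sum g S = 0"
    using assms(4) by linarith
  then have "\<forall>w\<in>S. g w = 0"
    using nonneg by (simp add: sum_nonneg_eq_0_iff[OF assms(1)])
  then have "\<mu> w = 0" if "w \<in> S" for w
    using bspec[OF _ that] assms(2) by (force simp: g_def)
  then show ?thesis
    using \<mu>(2) by simp
qed


definition simple_inscribed :: "'a::euclidean_space set \<Rightarrow> ('a \<Rightarrow> 'a set) \<Rightarrow> bool" where
  "simple_inscribed P N \<longleftrightarrow> finite P \<and> P \<subseteq> sphere 0 1 \<and>
     (\<forall>u\<in>P. N u \<subseteq> P - {u} \<and> card (N u) = DIM('a) \<and> independent ((\<lambda>w. w - u) ` N u) \<and>
        P \<subseteq> cone_at u (N u))"

lemma simple_inscribedD: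
  fixes P :: "'a::euclidean_space set"
  assumes "simple_inscribed P N" "u \<in> P"
  shows "finite P" "P \<subseteq> sphere 0 1" "N u \<subseteq> P - {u}" "card (N u) = DIM('a)"
    "independent ((\<lambda>w. w - u) ` N u)" "P \<subseteq> cone_at u (N u)" "finite (N u)"
proof -
  show "finite P" "P \<subseteq> sphere 0 1" "N u \<subseteq> P - {u}" "card (N u) = DIM('a)"
    "independent ((\<lambda>w. w - u) ` N u)" "P \<subseteq> cone_at u (N u)"
    using assms unfolding simple_inscribed_def by auto
  then show "finite (N u)"
    using finite_subset by blast
qed

lemma norm_segment_sq:
  fixes u v :: "'a::real_inner"
  assumes "norm u = R" "norm v = R"
  shows "(norm (u + t *\<^sub>R (v - u)))\<^sup>2 = R\<^sup>2 - t * (1 - t) * (norm (v - u))\<^sup>2"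
proof -
  have "u + t *\<^sub>R (v - u) = (1 - t) *\<^sub>R u + t *\<^sub>R v"
    by (simp add: algebra_simps)
  then have "(norm (u + t *\<^sub>R (v - u)))\<^sup>2 =
    (1 - t) * (norm u)\<^sup>2 + t * (norm v)\<^sup>2 - t * (1 - t) * (norm (u - v))\<^sup>2"
    by (simp only: norm_convex_combination_sq)
  then show ?thesis
    using assms by (simp add: norm_minus_commute algebra_simps)
qed

lemma in_closed_segment_if_norm_le:
  fixes u v :: "'a::real_inner"
  assumes "norm u = 1" "norm v = 1" "u \<noteq> v" "norm a \<le> 1" "0 \<le> \<alpha>" "a - u = \<alpha> *\<^sub>R (v - u)"
  shows "a \<in> closed_segment u v"
proof -
  have a: "a = u + \<alpha> *\<^sub>R (v - u)"
    using assms(6) by (simp add: algebra_simps)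
  have "(norm a)\<^sup>2 \<le> 1"
    using assms(4) by (simp add: power_le_one)
  then have "0 \<le> \<alpha> * (1 - \<alpha>) * (norm (v - u))\<^sup>2"
    using norm_segment_sq[OF assms(1,2), of \<alpha>] a by simp
  moreover have "0 < (norm (v - u))\<^sup>2"
    using assms(3) by simp
  ultimately have "\<alpha> \<le> 1"
    using assms(5) by (smt (verit) mult_le_0_iff zero_le_mult_iff)
  then show ?thesis
    using assms(5) a unfolding in_segment by (intro disjI2 exI[of _ \<alpha>]) (simp add: algebra_simps)
qed

lemma skel_edge_if_neighbour:
  fixes P :: "'a::euclidean_space set"
  assumes P: "simple_inscribed P N" and u: "u \<in> P" and v: "v \<in> N u"
  shows "skel_edge P u v"
proof -
  note P_u = simple_inscribedD[OF P u]
  have vP: "v \<in> P" and uv: "u \<noteq> v"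
    using P_u(3) v by auto
  have norms: "norm u = 1" "norm v = 1"
    using P_u(2) u vP by auto
  have on_edge: "a \<in> closed_segment u v"
    if a: "a \<in> convex hull P" and x: "x \<in> closed_segment u v" "x \<in> open_segment a b"
      and b: "b \<in> convex hull P" for a b x
  proof -
    have cone: "convex hull P \<subseteq> cone_at u (N u)"
      using P_u(6) by (rule hull_minimal) (rule convex_cone_at)
    obtain s where "x - u = s *\<^sub>R (v - u)"
      using x(1) unfolding in_segment by (auto simp: algebra_simps)
    then obtain \<alpha> where "0 \<le> \<alpha>" "a - u = \<alpha> *\<^sub>R (v - u)"
      using cone_at_open_segment_ray[OF P_u(7,5) v, of a b x s] a b x(2) cone by blast
    moreover have "norm a \<le> 1"
      using convex_hull_sphere_subset_cball[OF P_u(2)] a by auto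
    ultimately show ?thesis
      using in_closed_segment_if_norm_le[OF norms uv] by blast
  qed
  have "closed_segment u v face_of convex hull P"
    unfolding face_of_def
  proof (intro conjI ballI impI)
    show "closed_segment u v \<subseteq> convex hull P"
      using hull_inc[OF u] hull_inc[OF vP] by (rule closed_segment_subset) simp
    fix a b x
    assume "a \<in> convex hull P" "b \<in> convex hull P" "x \<in> closed_segment u v" "x \<in> open_segment a b"
    then show "a \<in> closed_segment u v" "b \<in> closed_segment u v"
      using on_edge open_segment_commute by metis+
  qed simp
  then show ?thesis
    using uv by (simp add: skel_edge_def)
qed

lemma neighbour_if_skel_edge:
  fixes P :: "'a::euclidean_space set"
  assumes P: "simple_inscribed P N" and e: "skel_edge P u v"
  shows "v \<in> N u"
proof (rule ccontr)
  assume vN: "v \<notin> N u"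
  have uP: "u \<in> P" and vP: "v \<in> P"
    using skel_edge_mem[OF e] by auto
  have uv: "u \<noteq> v"
    using e by (simp add: skel_edge_def)
  note P_u = simple_inscribedD[OF P uP]
  obtain c d where H: "convex hull P \<subseteq> {x. c \<bullet> x \<le> d}"
    "closed_segment u v = convex hull P \<inter> {x. c \<bullet> x = d}"
    using skel_edge_supporting_hyperplane[OF P_u(1) e] by blast
  have cu: "c \<bullet> u = d" and cv: "c \<bullet> v = d"
    using ends_in_segment(1)[of u v] ends_in_segment(2)[of v u] unfolding H(2) by auto
  text \<open>The supporting hyperplane of the edge leaves every other neighbour of \<open>u\<close> strictly below.\<close>
  have below: "\<forall>w\<in>N u. c \<bullet> (w - u) < 0"
  proof
    fix w
    assume w: "w \<in> N u"
    have wP: "w \<in> P"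
      using w P_u(3) by blast
    then have "c \<bullet> w \<le> d"
      using H(1) hull_inc[OF wP] by blast
    moreover have "c \<bullet> w \<noteq> d"
    proof
      assume "c \<bullet> w = d"
      then have "w \<in> closed_segment u v"
        using hull_inc[OF wP] unfolding H(2) by simp
      then have "w = u \<or> w = v"
        using extreme_point_in_closed_segment extreme_point_of_convex_hull_sphere[OF P_u(2) wP]
          hull_inc[OF uP] hull_inc[OF vP] by blast
      then show False
        using w P_u(3) vN by blast
    qed
    ultimately show "c \<bullet> (w - u) < 0"
      using cu by (simp add: inner_diff_right)
  qed
  moreover have "v \<in> cone_at u (N u)"
    using P_u(6) vP by blast
  moreover have "0 \<le> c \<bullet> (v - u)"
    using cu cv by (simp add: inner_diff_right)
  ultimately have "v = u"
    by (rule eq_apex_if_cone_at_nonneg[OF P_u(7)])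
  then show False
    using uv by simp
qed

lemma simple_inscribed_skel_edge_iff:
  assumes "simple_inscribed P N"
  shows "skel_edge P u v \<longleftrightarrow> u \<in> P \<and> v \<in> N u"
  using skel_edge_if_neighbour[OF assms] neighbour_if_skel_edge[OF assms] skel_edge_mem by blast

lemma simple_inscribed_simplex:
  fixes P :: "'a::euclidean_space set"
  assumes P: "P \<subseteq> sphere 0 1" "card P = DIM('a) + 1" "\<not> affine_dependent P"
  shows "simple_inscribed P (\<lambda>u. P - {u})"
  unfolding simple_inscribed_def
proof (intro conjI ballI)
  show fin: "finite P"
    using P(2) card.infinite by fastforce
  show "P \<subseteq> sphere 0 1"
    using P(1) .
  fix u
  assume u: "u \<in> P"
  show "P - {u} \<subseteq> P - {u}"
    by simp
  show "card (P - {u}) = DIM('a)"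
    using P(2) u fin by simp
  have "(\<lambda>x. - u + x) = (\<lambda>w. w - u)"
    by auto
  then show "independent ((\<lambda>w. w - u) ` (P - {u}))"
    using P(3) affine_dependent_iff_dependent2[OF u] by simp
  show "P \<subseteq> cone_at u (P - {u})"
  proof
    fix x
    assume x: "x \<in> P"
    have "x - u = (\<Sum>w\<in>P - {u}. (if w = x then 1 else 0) *\<^sub>R (w - u))"
      using fin x by (cases "x = u") (simp_all add: sum.remove[of "P - {u}" x] sum.neutral)
    then show "x \<in> cone_at u (P - {u})"
      unfolding cone_at_def by (intro CollectI exI[of _ "\<lambda>w. if w = x then 1 else 0"]) simp
  qed
qed


section \<open>Truncation\<close>

text \<open>The smaller root \<open>t\<close> of \<open>t (1 - t) = (1 - \<rho>\<^sup>2) / \<parallel>v - u\<parallel>\<^sup>2\<close>: for \<open>u\<close>, \<open>v\<close> on the unit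
  sphere, \<open>u + t (v - u)\<close> is the point of the segment on the sphere of radius \<open>\<rho>\<close> nearest to \<open>u\<close>.\<close>

definition cut_param :: "real \<Rightarrow> 'a::real_normed_vector \<Rightarrow> 'a \<Rightarrow> real" where
  "cut_param \<rho> u v = (1 - sqrt (1 - 4 * ((1 - \<rho>\<^sup>2) / (norm (v - u))\<^sup>2))) / 2"

lemma cut_param_commute: "cut_param \<rho> v u = cut_param \<rho> u v"
  by (simp add: cut_param_def norm_minus_commute)

lemma mult_one_minus_eq_iff:
  fixes s t :: real
  shows "t * (1 - t) = s * (1 - s) \<longleftrightarrow> t = s \<or> t = 1 - s"
proof -
  have "t * (1 - t) - s * (1 - s) = (t - s) * (1 - t - s)"
    by (simp add: algebra_simps)
  then show ?thesis
    by auto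
qed

lemma norm_segment_eq_iff:
  fixes u v :: "'a::real_inner"
  assumes "norm u = 1" "norm v = 1" "u \<noteq> v" "0 < \<rho>"
  shows "norm (u + t *\<^sub>R (v - u)) = \<rho> \<longleftrightarrow> t * (1 - t) = (1 - \<rho>\<^sup>2) / (norm (v - u))\<^sup>2"
proof -
  have "norm (u + t *\<^sub>R (v - u)) = \<rho> \<longleftrightarrow> (norm (u + t *\<^sub>R (v - u)))\<^sup>2 = \<rho>\<^sup>2"
    using assms(4) by (simp add: power2_eq_iff_nonneg)
  also have "\<dots> \<longleftrightarrow> 1 - t * (1 - t) * (norm (v - u))\<^sup>2 = \<rho>\<^sup>2"
    using norm_segment_sq[OF assms(1,2)] by simp
  also have "\<dots> \<longleftrightarrow> t * (1 - t) = (1 - \<rho>\<^sup>2) / (norm (v - u))\<^sup>2"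
    using assms(3) by (auto simp: field_simps)
  finally show ?thesis .
qed

lemma sphere_inter_closed_segment:
  fixes u v :: "'a::real_inner"
  assumes uv: "norm u = 1" "norm v = 1" "u \<noteq> v" and \<rho>: "0 < \<rho>" "\<rho> < 1"
    and two: "card (sphere 0 \<rho> \<inter> closed_segment u v) = 2"
  defines "\<tau> \<equiv> cut_param \<rho> u v"
  shows "0 < \<tau>" "\<tau> < 1/2"
    "sphere 0 \<rho> \<inter> closed_segment u v = {u + \<tau> *\<^sub>R (v - u), u + (1 - \<tau>) *\<^sub>R (v - u)}"
proof -
  define c where "c = (1 - \<rho>\<^sup>2) / (norm (v - u))\<^sup>2"
  have c: "0 < c"
    using uv(3) \<rho> by (simp add: c_def power_less_one_iff abs_of_pos)
  have param: "closed_segment u v = {u + t *\<^sub>R (v - u) | t. 0 \<le> t \<and> t \<le> 1}"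
    unfolding closed_segment_def by (force simp: algebra_simps)
  have mem: "u + t *\<^sub>R (v - u) \<in> sphere 0 \<rho> \<longleftrightarrow> t * (1 - t) = c" for t
    using norm_segment_eq_iff[OF uv \<rho>(1)] by (simp add: c_def)
  obtain y1 y2 where S2: "sphere 0 \<rho> \<inter> closed_segment u v = {y1, y2}" "y1 \<noteq> y2"
    using two by (auto simp: card_2_iff)
  then obtain t1 t2 where t1: "0 \<le> t1" "t1 \<le> 1" "y1 = u + t1 *\<^sub>R (v - u)"
    and t2: "0 \<le> t2" "t2 \<le> 1" "y2 = u + t2 *\<^sub>R (v - u)"
    unfolding param by blast
  have e1: "t1 * (1 - t1) = c" and e2: "t2 * (1 - t2) = c"
    using S2(1) t1(3) t2(3) mem by blast+
  have "t1 \<noteq> t2"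
    using S2(2) t1 t2 by auto
  then have t12: "t2 = 1 - t1"
    using e1 e2 mult_one_minus_eq_iff[of t2 t1] by auto
  define \<tau>0 where "\<tau>0 = min t1 t2"
  have e0: "\<tau>0 * (1 - \<tau>0) = c"
    using e1 e2 by (simp add: \<tau>0_def min_def)
  have h: "\<tau>0 < 1/2"
    using t12 \<open>t1 \<noteq> t2\<close> by (auto simp: \<tau>0_def min_def)
  have p: "0 < \<tau>0"
    using t1 t2 e0 c by (cases "\<tau>0 = 0") (auto simp: \<tau>0_def)
  have "1 - 4 * c = (1 - 2 * \<tau>0)\<^sup>2"
    using e0 by (simp add: power2_eq_square algebra_simps)
  then have "\<tau> = \<tau>0"
    using h by (simp add: \<tau>_def cut_param_def c_def[symmetric])
  then show "0 < \<tau>" "\<tau> < 1/2"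
    using p h by simp_all
  have "(1 - \<tau>) * (1 - (1 - \<tau>)) = c"
    using e0 \<open>\<tau> = \<tau>0\<close> by (simp add: algebra_simps)
  then show "sphere 0 \<rho> \<inter> closed_segment u v = {u + \<tau> *\<^sub>R (v - u), u + (1 - \<tau>) *\<^sub>R (v - u)}"
    unfolding param using mem e0 \<open>\<tau> = \<tau>0\<close> p h mult_one_minus_eq_iff[of _ \<tau>] by auto
qed


locale truncation =
  fixes P :: "'a::euclidean_space set" and N :: "'a \<Rightarrow> 'a set" and d :: real and Q :: "'a set"
  assumes simple: "simple_inscribed P N" and trunc: "trunc P d Q"
begin

text \<open>\<open>p u v\<close> is the point where the sphere of radius \<open>\<rho>\<close> cuts the edge \<open>[u, v]\<close> near \<open>u\<close>, and
  \<open>q u v\<close> the corresponding vertex of the truncation.\<close>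

definition "\<rho> = 1 - d"
definition "\<tau> u v = cut_param \<rho> u v"
definition "p u v = u + \<tau> u v *\<^sub>R (v - u)"
definition "q u v = (1 / \<rho>) *\<^sub>R p u v"

lemma rho_bounds: "0 < \<rho>" "\<rho> < 1"
  using trunc unfolding trunc_def \<rho>_def by auto

lemma edge_iff: "skel_edge P u v \<longleftrightarrow> u \<in> P \<and> v \<in> N u"
  by (rule simple_inscribed_skel_edge_iff[OF simple])

lemma neighbour:
  assumes "u \<in> P" "v \<in> N u"
  shows "v \<in> P" "u \<in> N v" "u \<noteq> v" "norm u = 1" "norm v = 1"
proof -
  show "v \<in> P" "u \<noteq> v"
    using simple_inscribedD(3)[OF simple assms(1)] assms(2) by auto
  then show "norm u = 1" "norm v = 1"
    using simple_inscribedD(2)[OF simple assms(1)] assms(1) by auto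
  show "u \<in> N v"
    using assms edge_iff skel_edge_commute by blast
qed

lemma p_reverse: "p v u = u + (1 - \<tau> u v) *\<^sub>R (v - u)"
  by (simp add: p_def \<tau>_def cut_param_commute algebra_simps)

lemma p_reverse_diff: "p v u - p u v = (1 - 2 * \<tau> u v) *\<^sub>R (v - u)"
proof -
  have "p v u - p u v = (1 - \<tau> u v) *\<^sub>R (v - u) - \<tau> u v *\<^sub>R (v - u)"
    by (simp add: p_reverse[of v u] p_def[of u v])
  also have "\<dots> = (1 - 2 * \<tau> u v) *\<^sub>R (v - u)"
    by (simp add: scaleR_diff_left[symmetric])
  finally show ?thesis .
qed

lemma edge_meets_sphere:
  assumes "u \<in> P" "v \<in> N u"
  shows "0 < \<tau> u v" "\<tau> u v < 1/2" "sphere 0 \<rho> \<inter> closed_segment u v = {p u v, p v u}"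
proof -
  have "card (sphere 0 \<rho> \<inter> closed_segment u v) = 2"
    using trunc assms edge_iff unfolding trunc_def \<rho>_def by blast
  note cut = sphere_inter_closed_segment[OF neighbour(4,5,3)[OF assms] rho_bounds this]
  show "0 < \<tau> u v" "\<tau> u v < 1/2"
    using cut(1,2) by (simp_all add: \<tau>_def)
  show "sphere 0 \<rho> \<inter> closed_segment u v = {p u v, p v u}"
    using cut(3) by (simp add: p_reverse[of v u] p_def[of u v] \<tau>_def)
qed

lemma cut_point:
  assumes "u \<in> P" "v \<in> N u"
  shows "p u v \<in> closed_segment u v" "norm (p u v) = \<rho>"
  using edge_meets_sphere(3)[OF assms] rho_bounds by auto

lemma norm_q:
  assumes "u \<in> P" "v \<in> N u"
  shows "norm (q u v) = 1"
  using cut_point(2)[OF assms] rho_bounds by (simp add: q_def)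

lemma Q_eq: "Q = {q u v | u v. u \<in> P \<and> v \<in> N u}"
proof -
  have "Q = (\<lambda>x. (1 / \<rho>) *\<^sub>R x) ` \<Union>{sphere 0 \<rho> \<inter> closed_segment u v | u v. skel_edge P u v}"
    using trunc unfolding trunc_def \<rho>_def by blast
  also have "\<Union>{sphere 0 \<rho> \<inter> closed_segment u v | u v. skel_edge P u v} =
    {p u v | u v. u \<in> P \<and> v \<in> N u}"
    using edge_meets_sphere(3) neighbour(1,2) unfolding edge_iff by blast
  finally show ?thesis
    unfolding q_def by blast
qed

text \<open>A cut point lies in the relative interior of its edge, and the edge is a face of the
  polytope; so any edge through the cut point has the same ends.\<close>

lemma p_inj:
  assumes uv: "u \<in> P" "v \<in> N u" and uv': "u' \<in> P" "v' \<in> N u'" and eq: "p u v = p u' v'"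
  shows "u = u' \<and> v = v'"
proof -
  have F: "closed_segment u v face_of convex hull P"
    using edge_iff uv unfolding skel_edge_def by blast
  have "p u v \<noteq> u'" "p u v \<noteq> v'"
    using cut_point(2)[OF uv] neighbour(4,5)[OF uv'] rho_bounds by auto
  then have "p u v \<in> open_segment u' v'"
    using cut_point(1)[OF uv'] eq unfolding open_segment_def by auto
  then have "u' \<in> closed_segment u v" "v' \<in> closed_segment u v"
    using F cut_point(1)[OF uv] hull_inc[OF uv'(1)] hull_inc[OF neighbour(1)[OF uv']]
    unfolding face_of_def by blast+
  then have ends: "u' = u \<or> u' = v" "v' = u \<or> v' = v"
    using extreme_point_in_closed_segment hull_inc[OF uv(1)] hull_inc[OF neighbour(1)[OF uv]]
      extreme_point_of_convex_hull_sphere[OF simple_inscribedD(2)[OF simple uv(1)]]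
      uv'(1) neighbour(1)[OF uv'] by meson+
  have "(1 - 2 * \<tau> u v) *\<^sub>R (v - u) \<noteq> 0"
    using edge_meets_sphere(2)[OF uv] neighbour(3)[OF uv] by simp
  then have "p v u \<noteq> p u v"
    using p_reverse_diff[of v u] by force
  then show ?thesis
    using ends eq neighbour(3)[OF uv'] by auto
qed

lemma q_inj:
  assumes "u \<in> P" "v \<in> N u" "u' \<in> P" "v' \<in> N u'" "q u v = q u' v'"
  shows "u = u' \<and> v = v'"
  using p_inj[OF assms(1-4)] assms(5) rho_bounds by (simp add: q_def)


text \<open>In the coordinates \<open>\<mu>\<close> of \<open>x - u\<close> with respect to the edge vectors \<open>w - u\<close>, the cut points
  \<open>p u w\<close> span the hyperplane \<open>cut_weight u \<mu> = 1\<close> that truncates the vertex \<open>u\<close>.\<close>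

definition cut_weight :: "'a \<Rightarrow> ('a \<Rightarrow> real) \<Rightarrow> real" where
  "cut_weight u \<mu> = (\<Sum>w\<in>N u. \<mu> w / \<tau> u w)"

lemma in_hull_cut_points:
  assumes u: "u \<in> P" and \<mu>: "\<forall>w\<in>N u. 0 \<le> \<mu> w" "x - u = (\<Sum>w\<in>N u. \<mu> w *\<^sub>R (w - u))"
    and le: "cut_weight u \<mu> \<le> 1"
  shows "x \<in> convex hull (insert u (p u ` N u))"
proof -
  note P_u = simple_inscribedD[OF simple u]
  define a where "a w = (if w = u then 1 - cut_weight u \<mu> else \<mu> w / \<tau> u w)" for w
  define y where "y w = (if w = u then u else p u w)" for w
  have uN: "u \<notin> N u"
    using P_u(3) by blast
  have \<tau>: "0 < \<tau> u w" if "w \<in> N u" for w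
    using edge_meets_sphere(1)[OF u that] .
  have "(\<Sum>w\<in>N u. a w) = cut_weight u \<mu>"
    unfolding cut_weight_def using uN by (intro sum.cong) (auto simp: a_def)
  then have "(\<Sum>w\<in>insert u (N u). a w) = 1"
    using P_u(7) uN by (simp add: a_def[of u])
  moreover have "0 \<le> a w" if "w \<in> insert u (N u)" for w
    using that le \<mu>(1) \<tau> by (auto simp: a_def intro!: divide_nonneg_pos)
  moreover have "y w \<in> convex hull (insert u (p u ` N u))" if "w \<in> insert u (N u)" for w
    using that by (auto simp: y_def intro: hull_inc)
  ultimately have hull: "(\<Sum>w\<in>insert u (N u). a w *\<^sub>R y w) \<in> convex hull (insert u (p u ` N u))"
    using P_u(7) by (intro convex_sum) auto
  have "(\<Sum>w\<in>N u. a w *\<^sub>R y w) = (\<Sum>w\<in>N u. (\<mu> w / \<tau> u w) *\<^sub>R u + \<mu> w *\<^sub>R (w - u))"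
  proof (rule sum.cong)
    fix w
    assume w: "w \<in> N u"
    then have "a w *\<^sub>R y w = (\<mu> w / \<tau> u w) *\<^sub>R u + ((\<mu> w / \<tau> u w) * \<tau> u w) *\<^sub>R (w - u)"
      using uN by (auto simp: a_def y_def p_def scaleR_add_right)
    then show "a w *\<^sub>R y w = (\<mu> w / \<tau> u w) *\<^sub>R u + \<mu> w *\<^sub>R (w - u)"
      using \<tau>[OF w] by simp
  qed simp
  also have "\<dots> = cut_weight u \<mu> *\<^sub>R u + (x - u)"
    unfolding cut_weight_def \<mu>(2) by (simp add: sum.distrib scaleR_sum_left)
  finally have "(\<Sum>w\<in>insert u (N u). a w *\<^sub>R y w) = x"
    using P_u(7) uN by (simp add: y_def[of u] a_def[of u] algebra_simps)
  then show ?thesis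
    using hull by simp
qed

lemma cut_weight_gt_one:
  assumes u: "u \<in> P" and x: "x \<in> P" "x \<noteq> u"
    and \<mu>: "\<forall>w\<in>N u. 0 \<le> \<mu> w" "x - u = (\<Sum>w\<in>N u. \<mu> w *\<^sub>R (w - u))"
  shows "1 < cut_weight u \<mu>"
proof (rule ccontr)
  note P_u = simple_inscribedD[OF simple u]
  assume "\<not> 1 < cut_weight u \<mu>"
  then have x_hull: "x \<in> convex hull (insert u (p u ` N u))"
    using in_hull_cut_points[OF u \<mu>] by simp
  have "p u w \<in> convex hull P" if "w \<in> N u" for w
  proof -
    have "closed_segment u w \<subseteq> convex hull P"
      using hull_inc[OF u] hull_inc[OF neighbour(1)[OF u that]] by (rule closed_segment_subset) simp
    then show ?thesis
      using cut_point(1)[OF u that] by blast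
  qed
  then have "insert u (p u ` N u) \<subseteq> convex hull P"
    using hull_inc[OF u] by blast
  then have "convex hull (insert u (p u ` N u)) \<subseteq> convex hull P"
    by (simp add: hull_minimal)
  then have "x extreme_point_of convex hull (insert u (p u ` N u))"
    using extreme_point_of_convex_hull_sphere[OF P_u(2) x(1)] x_hull
    unfolding extreme_point_of_def by blast
  then have "x \<in> insert u (p u ` N u)"
    by (rule extreme_point_of_convex_hull)
  then obtain w where "w \<in> N u" "x = p u w"
    using x(2) by blast
  then show False
    using cut_point(2)[OF u] neighbour(5)[OF x(1) _] x(1) P_u(2) rho_bounds by force
qed


definition beyond_cut :: "'a \<Rightarrow> 'a set" where
  "beyond_cut u = {x. \<exists>\<mu>. (\<forall>w\<in>N u. 0 \<le> \<mu> w) \<and> x - u = (\<Sum>w\<in>N u. \<mu> w *\<^sub>R (w - u)) \<and>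
    1 \<le> cut_weight u \<mu>}"

lemma convex_beyond_cut: "convex (beyond_cut u)"
  unfolding convex_def
proof (intro ballI allI impI)
  fix x y and a b :: real
  assume "x \<in> beyond_cut u" "y \<in> beyond_cut u" and ab: "0 \<le> a" "0 \<le> b" "a + b = 1"
  then obtain \<mu> \<nu> where \<mu>: "\<forall>w\<in>N u. 0 \<le> \<mu> w" "x - u = (\<Sum>w\<in>N u. \<mu> w *\<^sub>R (w - u))"
      "1 \<le> cut_weight u \<mu>"
    and \<nu>: "\<forall>w\<in>N u. 0 \<le> \<nu> w" "y - u = (\<Sum>w\<in>N u. \<nu> w *\<^sub>R (w - u))" "1 \<le> cut_weight u \<nu>"
    unfolding beyond_cut_def by blast
  define \<kappa> where "\<kappa> w = a * \<mu> w + b * \<nu> w" for w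
  have "a *\<^sub>R x + b *\<^sub>R y - u = a *\<^sub>R (x - u) + b *\<^sub>R (y - u)"
    using ab by (simp add: algebra_simps flip: scaleR_add_left)
  also have "\<dots> = (\<Sum>w\<in>N u. \<kappa> w *\<^sub>R (w - u))"
    unfolding \<mu>(2) \<nu>(2) \<kappa>_def by (simp add: scaleR_sum_right sum.distrib scaleR_add_left)
  finally have sum_eq: "a *\<^sub>R x + b *\<^sub>R y - u = (\<Sum>w\<in>N u. \<kappa> w *\<^sub>R (w - u))" .
  have "cut_weight u \<kappa> = a * cut_weight u \<mu> + b * cut_weight u \<nu>"
    by (simp add: cut_weight_def \<kappa>_def sum_distrib_left sum.distrib add_divide_distrib)
  moreover have "a * 1 + b * 1 \<le> a * cut_weight u \<mu> + b * cut_weight u \<nu>"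
    using \<mu>(3) \<nu>(3) ab by (intro add_mono mult_left_mono) simp_all
  ultimately have ge: "1 \<le> cut_weight u \<kappa>"
    using ab(3) by simp
  have nonneg: "0 \<le> \<kappa> w" if "w \<in> N u" for w
  proof -
    have "0 \<le> \<mu> w" "0 \<le> \<nu> w"
      using that \<mu>(1) \<nu>(1) by auto
    then have "0 \<le> a * \<mu> w" "0 \<le> b * \<nu> w"
      using ab by (simp_all add: mult_nonneg_nonneg)
    then show ?thesis
      unfolding \<kappa>_def by linarith
  qed
  show "a *\<^sub>R x + b *\<^sub>R y \<in> beyond_cut u"
    unfolding beyond_cut_def using sum_eq ge nonneg
    by (intro CollectI exI[of _ \<kappa>] conjI ballI) simp_all
qed

lemma vertex_beyond_cut:
  assumes u: "u \<in> P" and x: "x \<in> P" "x \<noteq> u"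
  shows "x \<in> beyond_cut u"
proof -
  obtain \<mu> where \<mu>: "\<forall>w\<in>N u. 0 \<le> \<mu> w" "x - u = (\<Sum>w\<in>N u. \<mu> w *\<^sub>R (w - u))"
    using simple_inscribedD(6)[OF simple u] x(1) unfolding cone_at_def by blast
  then show ?thesis
    using cut_weight_gt_one[OF u x \<mu>] unfolding beyond_cut_def
    by (intro CollectI exI[of _ \<mu>] conjI) simp_all
qed

lemma edge_point_beyond_cut:
  assumes u: "u \<in> P" and w: "w \<in> N u" and c: "\<tau> u w \<le> c"
  shows "u + c *\<^sub>R (w - u) \<in> beyond_cut u"
proof -
  have "0 < \<tau> u w"
    using edge_meets_sphere(1)[OF u w] .
  then have "0 \<le> c" "1 \<le> c / \<tau> u w"
    using c by (simp_all add: le_divide_eq_1_pos)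
  then show ?thesis
    using simple_inscribedD(7)[OF simple u] w unfolding beyond_cut_def cut_weight_def
    by (intro CollectI exI[of _ "\<lambda>w'. if w' = w then c else 0"])
      (simp add: sum.remove[of "N u" w] sum.neutral)
qed

text \<open>This yields the cone condition at the new vertices.\<close>

lemma cut_point_beyond_cut:
  assumes u: "u \<in> P" and yz: "y \<in> P" "z \<in> N y"
  shows "p y z \<in> beyond_cut u"
proof -
  consider "y = u" | "z = u" | "y \<noteq> u" "z \<noteq> u"
    by blast
  then show ?thesis
  proof cases
    case 1
    then have "z \<in> N u" "p y z = u + \<tau> u z *\<^sub>R (z - u)"
      using yz by (simp_all add: p_def)
    then show ?thesis
      using edge_point_beyond_cut[OF u] by simp
  next
    case 2
    then have y: "y \<in> N u"
      using neighbour(2)[OF yz] by simp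
    have "\<tau> u y \<le> 1 - \<tau> u y"
      using edge_meets_sphere(2)[OF u y] by simp
    then show ?thesis
      using edge_point_beyond_cut[OF u y] 2 by (simp add: p_reverse[of y u])
  next
    case 3
    have "closed_segment y z \<subseteq> beyond_cut u"
      using vertex_beyond_cut[OF u yz(1) 3(1)] vertex_beyond_cut[OF u neighbour(1)[OF yz] 3(2)]
        convex_beyond_cut by (rule closed_segment_subset)
    then show ?thesis
      using cut_point(1)[OF yz] by blast
  qed
qed

definition N_trunc :: "'a \<Rightarrow> 'a set" where
  "N_trunc x = {y. \<exists>u v. u \<in> P \<and> v \<in> N u \<and> x = q u v \<and> (y = q v u \<or> (\<exists>w\<in>N u - {v}. y = q u w))}"

lemma N_trunc_eq:
  assumes uv: "u \<in> P" "v \<in> N u"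
  shows "N_trunc (q u v) = insert (q v u) (q u ` (N u - {v}))"
proof
  show "N_trunc (q u v) \<subseteq> insert (q v u) (q u ` (N u - {v}))"
    using q_inj[OF uv] unfolding N_trunc_def by blast
  show "insert (q v u) (q u ` (N u - {v})) \<subseteq> N_trunc (q u v)"
    unfolding N_trunc_def using uv by blast
qed

lemma q_reverse_notin:
  assumes uv: "u \<in> P" "v \<in> N u"
  shows "q v u \<notin> q u ` (N u - {v})"
  using q_inj[OF neighbour(1,2)[OF uv] uv(1)] neighbour(3)[OF uv] by blast

lemma inj_on_q: "u \<in> P \<Longrightarrow> inj_on (q u) (N u)"
  using q_inj by (auto simp: inj_on_def)

lemma q_mem_Q: "u \<in> P \<Longrightarrow> v \<in> N u \<Longrightarrow> q u v \<in> Q"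
  using Q_eq by blast

lemma N_trunc_subset:
  assumes uv: "u \<in> P" "v \<in> N u"
  shows "N_trunc (q u v) \<subseteq> Q - {q u v}"
proof -
  have "q v u \<in> Q - {q u v}"
    using q_mem_Q[OF neighbour(1,2)[OF uv]] q_inj[OF neighbour(1,2)[OF uv] uv] neighbour(3)[OF uv]
    by auto
  moreover have "q u ` (N u - {v}) \<subseteq> Q - {q u v}"
  proof (rule image_subsetI)
    fix w
    assume "w \<in> N u - {v}"
    then show "q u w \<in> Q - {q u v}"
      using q_mem_Q[OF uv(1), of w] q_inj[OF uv(1) _ uv, of w] by auto
  qed
  ultimately show ?thesis
    unfolding N_trunc_eq[OF uv] by simp
qed

lemma card_N_trunc:
  assumes uv: "u \<in> P" "v \<in> N u"
  shows "card (N_trunc (q u v)) = DIM('a)"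
proof -
  note P_u = simple_inscribedD[OF simple uv(1)]
  have "card (q u ` (N u - {v})) = DIM('a) - 1"
    using card_image[OF inj_on_subset[OF inj_on_q[OF uv(1)]], of "N u - {v}"] P_u(4,7) uv(2) by simp
  then show ?thesis
    unfolding N_trunc_eq[OF uv] using q_reverse_notin[OF uv] P_u(7) DIM_positive[where 'a='a] by simp
qed

lemma edge_vector_in_span_N_trunc:
  assumes uv: "u \<in> P" "v \<in> N u" and w: "w \<in> N u"
  shows "w - u \<in> span ((\<lambda>y. y - q u v) ` N_trunc (q u v))"
proof -
  define B where "B = (\<lambda>y. y - q u v) ` N_trunc (q u v)"
  have \<tau>: "0 < \<tau> u w'" "\<tau> u w' < 1/2" if "w' \<in> N u" for w'
    using edge_meets_sphere(1,2)[OF uv(1) that] by simp_all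
  have "q v u - q u v = (1 / \<rho>) *\<^sub>R ((1 - 2 * \<tau> u v) *\<^sub>R (v - u))"
    using p_reverse_diff[of v u] by (simp add: q_def scaleR_diff_right[symmetric])
  then have "v - u = (\<rho> / (1 - 2 * \<tau> u v)) *\<^sub>R (q v u - q u v)"
    using rho_bounds \<tau>[OF uv(2)] by simp
  moreover have "q v u - q u v \<in> B"
    unfolding B_def N_trunc_eq[OF uv] by blast
  ultimately have v_span: "v - u \<in> span B"
    by (simp add: span_base span_mul)
  show ?thesis
  proof (cases "w = v")
    case False
    then have "q u w - q u v \<in> B"
      unfolding B_def N_trunc_eq[OF uv] using w by blast
    then have "(1 / \<tau> u w) *\<^sub>R (\<rho> *\<^sub>R (q u w - q u v) + \<tau> u v *\<^sub>R (v - u)) \<in> span B"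
      by (intro span_mul span_add span_base v_span span_mul)
    moreover have "q u w - q u v = (1 / \<rho>) *\<^sub>R (\<tau> u w *\<^sub>R (w - u) - \<tau> u v *\<^sub>R (v - u))"
      by (simp add: q_def p_def scaleR_diff_right[symmetric])
    then have "(1 / \<tau> u w) *\<^sub>R (\<rho> *\<^sub>R (q u w - q u v) + \<tau> u v *\<^sub>R (v - u)) = w - u"
      using rho_bounds \<tau>[OF w] by simp
    ultimately show ?thesis
      by (simp add: B_def)
  qed (use v_span in \<open>simp add: B_def\<close>)
qed

lemma independent_N_trunc:
  assumes uv: "u \<in> P" "v \<in> N u"
  shows "independent ((\<lambda>y. y - q u v) ` N_trunc (q u v))"
proof -
  note P_u = simple_inscribedD[OF simple uv(1)]
  define B where "B = (\<lambda>y. y - q u v) ` N_trunc (q u v)"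
  have "card ((\<lambda>w. w - u) ` N u) = dim (UNIV :: 'a set)"
    using card_image[of "\<lambda>w. w - u" "N u"] P_u(4) by (simp add: inj_on_def)
  then have "span ((\<lambda>w. w - u) ` N u) = UNIV"
    using card_eq_dim[of "(\<lambda>w. w - u) ` N u" UNIV] P_u(5,7) by auto
  moreover have "span ((\<lambda>w. w - u) ` N u) \<subseteq> span B"
    using edge_vector_in_span_N_trunc[OF uv] by (intro span_minimal) (auto simp: B_def)
  moreover have "card B \<le> dim (UNIV :: 'a set)"
    using card_image_le[of "N_trunc (q u v)" "\<lambda>y. y - q u v"] card_N_trunc[OF uv] N_trunc_eq[OF uv] P_u(7)
    by (simp add: B_def)
  moreover have "finite B"
    unfolding B_def N_trunc_eq[OF uv] using P_u(7) by simp
  ultimately show ?thesis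
    using card_le_dim_spanning[of B UNIV] unfolding B_def by auto
qed


text \<open>The coefficients are nonnegative as soon as \<open>1 \<le> cut_weight u \<mu>\<close>, i.e. as soon as \<open>x\<close> lies
  beyond the cut at \<open>u\<close>.\<close>

lemma cut_point_coordinates:
  assumes uv: "u \<in> P" "v \<in> N u" and x: "x - u = (\<Sum>w\<in>N u. \<mu> w *\<^sub>R (w - u))"
  shows "x - p u v = (\<Sum>w\<in>N u - {v}. (\<mu> w / \<tau> u w) *\<^sub>R (p u w - p u v)) +
    (((cut_weight u \<mu> - 1) * \<tau> u v) / (1 - 2 * \<tau> u v)) *\<^sub>R (p v u - p u v)"
proof -
  note P_u = simple_inscribedD[OF simple uv(1)]
  define T where "T = \<tau> u v"
  define e where "e = v - u"
  define A where "A = (\<Sum>w\<in>N u - {v}. \<mu> w *\<^sub>R (w - u))"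
  define K where "K = (\<Sum>w\<in>N u - {v}. \<mu> w / \<tau> u w)"
  have T: "0 < T" "T < 1/2"
    using edge_meets_sphere(1,2)[OF uv] by (simp_all add: T_def)
  have "(\<Sum>w\<in>N u - {v}. (\<mu> w / \<tau> u w) *\<^sub>R (p u w - p u v)) =
    (\<Sum>w\<in>N u - {v}. \<mu> w *\<^sub>R (w - u) - ((\<mu> w / \<tau> u w) * T) *\<^sub>R e)"
  proof (rule sum.cong)
    fix w
    assume "w \<in> N u - {v}"
    then have "\<tau> u w \<noteq> 0"
      using edge_meets_sphere(1)[OF uv(1)] by force
    then show "(\<mu> w / \<tau> u w) *\<^sub>R (p u w - p u v) = \<mu> w *\<^sub>R (w - u) - ((\<mu> w / \<tau> u w) * T) *\<^sub>R e"
      by (simp add: p_def T_def e_def scaleR_diff_right)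
  qed simp
  also have "\<dots> = A - (K * T) *\<^sub>R e"
    by (simp add: A_def K_def sum_subtractf scaleR_sum_left sum_distrib_right)
  finally have cut_part: "(\<Sum>w\<in>N u - {v}. (\<mu> w / \<tau> u w) *\<^sub>R (p u w - p u v)) = A - (K * T) *\<^sub>R e" .
  have reverse_part: "(((cut_weight u \<mu> - 1) * T) / (1 - 2 * T)) *\<^sub>R (p v u - p u v) =
    ((cut_weight u \<mu> - 1) * T) *\<^sub>R e"
    using p_reverse_diff[of v u] T by (simp add: T_def e_def)
  have "cut_weight u \<mu> = \<mu> v / T + K"
    using sum.remove[OF P_u(7) uv(2)] by (simp add: cut_weight_def K_def T_def)
  then have coeff: "(cut_weight u \<mu> - 1) * T - K * T = \<mu> v - T"
    using T by (simp add: field_simps)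
  have x_u: "x - u = \<mu> v *\<^sub>R e + A"
    using sum.remove[OF P_u(7) uv(2)] x by (simp add: A_def e_def)
  have "A - (K * T) *\<^sub>R e + ((cut_weight u \<mu> - 1) * T) *\<^sub>R e =
    A + ((cut_weight u \<mu> - 1) * T - K * T) *\<^sub>R e"
    by (simp add: scaleR_diff_left algebra_simps)
  also have "\<dots> = (x - u) - T *\<^sub>R e"
    unfolding coeff x_u by (simp add: scaleR_diff_left algebra_simps)
  also have "\<dots> = x - p u v"
    by (simp add: p_def T_def e_def)
  finally show ?thesis
    using cut_part reverse_part by (simp add: T_def)
qed

lemma Q_subset_cone_at:
  assumes uv: "u \<in> P" "v \<in> N u"
  shows "Q \<subseteq> cone_at (q u v) (N_trunc (q u v))"
proof
  fix x
  assume "x \<in> Q"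
  then obtain y z where yz: "y \<in> P" "z \<in> N y" and x: "x = q y z"
    using Q_eq by blast
  note P_u = simple_inscribedD[OF simple uv(1)]
  define S where "S = N u - {v}"
  have T: "0 < \<tau> u v" "\<tau> u v < 1/2"
    using edge_meets_sphere(1,2)[OF uv] by simp_all
  obtain \<mu> where \<mu>: "\<forall>w\<in>N u. 0 \<le> \<mu> w" "p y z - u = (\<Sum>w\<in>N u. \<mu> w *\<^sub>R (w - u))"
    and ge: "1 \<le> cut_weight u \<mu>"
    using cut_point_beyond_cut[OF uv(1) yz] unfolding beyond_cut_def by blast
  define c where "c w = \<mu> w / \<tau> u w" for w
  define c0 where "c0 = ((cut_weight u \<mu> - 1) * \<tau> u v) / (1 - 2 * \<tau> u v)"
  have c0: "0 \<le> c0"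
    using ge T by (simp add: c0_def)
  have c: "0 \<le> c w" if "w \<in> S" for w
    using that \<mu>(1) edge_meets_sphere(1)[OF uv(1)] by (auto simp: c_def S_def intro!: divide_nonneg_pos)
  have q_diff: "q y' z' - q u v = (1 / \<rho>) *\<^sub>R (p y' z' - p u v)" for y' z'
    by (simp add: q_def scaleR_diff_right)
  have x_coords: "x - q u v = (\<Sum>w\<in>S. c w *\<^sub>R (q u w - q u v)) + c0 *\<^sub>R (q v u - q u v)"
    unfolding x q_diff cut_point_coordinates[OF uv \<mu>(2)]
    by (simp add: c_def c0_def S_def scaleR_add_right scaleR_sum_right mult.commute)
  have "inj_on (q u) S"
    using inj_on_q[OF uv(1)] by (rule inj_on_subset) (simp add: S_def)
  moreover have "finite S"
    using P_u(7) by (simp add: S_def)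
  moreover have "q v u \<notin> q u ` S"
    using q_reverse_notin[OF uv] by (simp add: S_def)
  ultimately show "x \<in> cone_at (q u v) (N_trunc (q u v))"
    unfolding N_trunc_eq[OF uv] S_def[symmetric] using c c0 x_coords by (rule mem_cone_at_insert_image)
qed


lemma simple_inscribed_trunc: "simple_inscribed Q N_trunc"
  unfolding simple_inscribed_def
proof (intro conjI ballI)
  have "Q = (\<lambda>(u, v). q u v) ` (SIGMA u:P. N u)"
    unfolding Q_eq by auto
  moreover have "finite P"
    using simple by (simp add: simple_inscribed_def)
  ultimately show "finite Q"
    using simple_inscribedD(7)[OF simple] by (auto intro!: finite_imageI finite_SigmaI)
  show "Q \<subseteq> sphere 0 1"
    unfolding Q_eq using norm_q by auto
  fix x
  assume "x \<in> Q"
  then obtain u v where uv: "u \<in> P" "v \<in> N u" and x: "x = q u v"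
    using Q_eq by blast
  show "N_trunc x \<subseteq> Q - {x}" "card (N_trunc x) = DIM('a)"
    "independent ((\<lambda>w. w - x) ` N_trunc x)" "Q \<subseteq> cone_at x (N_trunc x)"
    unfolding x using N_trunc_subset[OF uv] card_N_trunc[OF uv] independent_N_trunc[OF uv]
      Q_subset_cone_at[OF uv] by simp_all
qed

lemma skel_edge_trunc_iff:
  assumes uv: "u \<in> P" "v \<in> N u" and uv': "u' \<in> P" "v' \<in> N u'"
  shows "skel_edge Q (q u v) (q u' v') \<longleftrightarrow> truncated_adj (u, v) (u', v')"
proof -
  have "skel_edge Q (q u v) (q u' v') \<longleftrightarrow> q u' v' \<in> N_trunc (q u v)"
    using simple_inscribed_skel_edge_iff[OF simple_inscribed_trunc] q_mem_Q[OF uv] by blast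
  also have "\<dots> \<longleftrightarrow> q u' v' = q v u \<or> (\<exists>w\<in>N u - {v}. q u' v' = q u w)"
    unfolding N_trunc_eq[OF uv] by blast
  also have "\<dots> \<longleftrightarrow> truncated_adj (u, v) (u', v')"
    using q_inj[OF uv' neighbour(1,2)[OF uv]] q_inj[OF uv' uv(1)] uv' by auto
  finally show ?thesis .
qed

lemma graph_iso_skel_trunc:
  "graph_iso {(u, v). skel_edge P u v} truncated_adj Q (skel_edge Q)"
  unfolding graph_iso_def
proof (intro exI conjI ballI)
  show "bij_betw (\<lambda>(u, v). q u v) {(u, v). skel_edge P u v} Q"
  proof (rule bij_betwI')
    fix e e'
    assume "e \<in> {(u, v). skel_edge P u v}" "e' \<in> {(u, v). skel_edge P u v}"
    then show "(case e of (u, v) \<Rightarrow> q u v) = (case e' of (u, v) \<Rightarrow> q u v) \<longleftrightarrow> e = e'"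
      using q_inj unfolding edge_iff by auto
  next
    fix e
    assume "e \<in> {(u, v). skel_edge P u v}"
    then show "(case e of (u, v) \<Rightarrow> q u v) \<in> Q"
      using q_mem_Q unfolding edge_iff by auto
  next
    fix x
    assume "x \<in> Q"
    then show "\<exists>e\<in>{(u, v). skel_edge P u v}. x = (case e of (u, v) \<Rightarrow> q u v)"
      unfolding Q_eq edge_iff by auto
  qed
  fix e e'
  assume "e \<in> {(u, v). skel_edge P u v}" "e' \<in> {(u, v). skel_edge P u v}"
  then show "truncated_adj e e' \<longleftrightarrow>
    skel_edge Q ((\<lambda>(u, v). q u v) e) ((\<lambda>(u, v). q u v) e')"
    using skel_edge_trunc_iff unfolding edge_iff by auto
qed

end

lemma truncations_hanoi:
  fixes P :: "nat \<Rightarrow> 'a::euclidean_space set" and d :: "nat \<Rightarrow> real"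
  assumes P0: "P 0 \<subseteq> sphere 0 1" "card (P 0) = DIM('a) + 1" "\<not> affine_dependent (P 0)"
    and trunc: "\<forall>i<j. trunc (P i) (d i) (P (Suc i))"
  shows "(\<exists>N. simple_inscribed (P j) N) \<and>
    graph_iso (P j) (skel_edge (P j)) (hanoi_states DIM('a) (Suc j)) (hanoi_adj DIM('a))"
  using trunc
proof (induction j)
  case 0
  have simplex: "simple_inscribed (P 0) (\<lambda>u. P 0 - {u})"
    using simple_inscribed_simplex[OF P0] .
  moreover have "graph_iso (P 0) (skel_edge (P 0)) (hanoi_states DIM('a) 1) (hanoi_adj DIM('a))"
  proof (rule graph_iso_hanoi_one)
    show "finite (P 0)"
      using simplex by (simp add: simple_inscribed_def)
  qed (use P0(2) simple_inscribed_skel_edge_iff[OF simplex] in auto)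
  ultimately show ?case
    by auto
next
  case (Suc j)
  then obtain N where simple: "simple_inscribed (P j) N"
    and iso: "graph_iso (P j) (skel_edge (P j)) (hanoi_states DIM('a) (Suc j)) (hanoi_adj DIM('a))"
    by auto
  interpret truncation "P j" N "d j" "P (Suc j)"
    using simple Suc.prems by unfold_locales auto
  have "graph_iso {(u, v). skel_edge (P j) u v} truncated_adj
      {(X, Y). X \<in> hanoi_states DIM('a) (Suc j) \<and> Y \<in> hanoi_states DIM('a) (Suc j) \<and>
        hanoi_adj DIM('a) X Y} truncated_adj"
    by (rule graph_iso_truncation[OF iso]) (simp add: skel_edge_mem)
  then have "graph_iso {(u, v). skel_edge (P j) u v} truncated_adj
      (hanoi_states DIM('a) (Suc (Suc j))) (hanoi_adj DIM('a))"
    by (rule graph_iso_trans) (rule graph_iso_hanoi_Suc, simp)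
  then have "graph_iso (P (Suc j)) (skel_edge (P (Suc j)))
      (hanoi_states DIM('a) (Suc (Suc j))) (hanoi_adj DIM('a))"
    by (rule graph_iso_trans[OF graph_iso_sym[OF graph_iso_skel_trunc]])
  then show ?case
    using simple_inscribed_trunc by blast
qed

theorem proposition7:
  fixes P :: "nat \<Rightarrow> (real ^ 'n) set" and d :: "nat \<Rightarrow> real" and k :: nat
  assumes "k \<ge> 1"
    and "P 0 \<subseteq> sphere 0 1"
    and "card (P 0) = CARD('n) + 1"
    and "\<not> affine_dependent (P 0)"
    and "\<forall>i. i + 1 < k \<longrightarrow> trunc (P i) (d i) (P (Suc i))"
  shows "graph_iso {x. skel_vertex (P (k - 1)) x} (skel_edge (P (k - 1)))
                   (hanoi_states CARD('n) k) (hanoi_adj CARD('n))"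
proof -
  have truncs: "\<forall>i<k - 1. trunc (P i) (d i) (P (Suc i))"
    using assms(5) by simp
  have card: "card (P 0) = DIM(real ^ 'n) + 1"
    using assms(3) by simp
  obtain N where simple: "simple_inscribed (P (k - 1)) N"
    and iso: "graph_iso (P (k - 1)) (skel_edge (P (k - 1))) (hanoi_states CARD('n) (Suc (k - 1)))
      (hanoi_adj CARD('n))"
    using truncations_hanoi[OF assms(2) card assms(4) truncs] by auto
  have "{x. skel_vertex (P (k - 1)) x} = P (k - 1)"
    using simple by (simp add: skel_vertices_sphere simple_inscribed_def)
  then show ?thesis
    using iso assms(1) by simp
qed

end
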